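(* Let $c\in\mathbb{C}$ and $n\geq 1$. Then the automorphism group of the vertex operator algebra $\mathcal{V}_c^{\otimes n}$ is the symmetric group $S_n$, acting by permutation of tensor factors: $$\mathrm{Aut}\,\mathcal{V}_c^{\otimes n}=S_n .$$
   Context: $\mathcal{V}_c$ denotes the universal Virasoro vertex operator algebra of central charge $c$, generated by a weight-2 vector $\omega$ whose field $L(z)=Y(\omega,z)=\sum_{n\in\mathbb{Z}}L(n)z^{-n-2}$ satisfies $[L(m),L(n)]=(m-n)L(m+n)+\frac{c}{12}(m^3-m)\delta_{m+n,0}$. In $\mathcal{V}_c^{\otimes n}$ write $\omega_i$ for the copy of $\omega$ in the $i$-th tensor factor, with modes $L_i(m)$; the conformal vector of $\mathcal{V}_c^{\otimes n}$ is $\omega_1+\cdots+\omega_n$. $S_n$ acts by $\sigma\cdot L_{i_1}(m_1)\cdots L_{i_k}(m_k)\mathbb{1}=L_{\sigma(i_1)}(m_1)\cdots L_{\sigma(i_k)}(m_k)\mathbb{1}$. *)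

theory Defs
  imports Complex_Main "HOL-Combinatorics.Permutations"
begin

text \<open>A vertex operator algebra over the complex numbers is rendered by its data:
  a complex vector space with addition from the type class and scalar multiplication sc,
  the products Y a m b = a_(m) b (so Y(a,z) = sum_m a_(m) z^(-m-1)), the vacuum vac and
  the conformal vector w.\<close>

text \<open>Finite sum over the support of a function on nat (all sums below have finite support).\<close>
definition fsum :: "(nat \<Rightarrow> 'v::ab_group_add) \<Rightarrow> 'v" where
  "fsum f = sum f {i. f i \<noteq> 0}"

definition sgn_pow :: "int \<Rightarrow> complex" where
  "sgn_pow k = (if even k then 1 else -1)"

definition Lmode :: "('v \<Rightarrow> int \<Rightarrow> 'v \<Rightarrow> 'v) \<Rightarrow> 'v \<Rightarrow> int \<Rightarrow> 'v \<Rightarrow> 'v" where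
  "Lmode Y w m = Y w (m + 1)"

definition L0_eigenspace ::
  "(complex \<Rightarrow> 'v::ab_group_add \<Rightarrow> 'v) \<Rightarrow> ('v \<Rightarrow> int \<Rightarrow> 'v \<Rightarrow> 'v) \<Rightarrow> 'v \<Rightarrow> int \<Rightarrow> 'v set" where
  "L0_eigenspace sc Y w k = {v. Lmode Y w 0 v = sc (of_int k) v}"

text \<open>Vertex operator algebra axioms (Frenkel--Lepowsky--Meurman), central charge cv.\<close>
definition is_VOA ::
  "(complex \<Rightarrow> 'v::ab_group_add \<Rightarrow> 'v) \<Rightarrow> ('v \<Rightarrow> int \<Rightarrow> 'v \<Rightarrow> 'v) \<Rightarrow> 'v \<Rightarrow> 'v \<Rightarrow> complex \<Rightarrow> bool" where
  "is_VOA sc Y vac w cv \<longleftrightarrow>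
     vector_space sc
   \<and> (\<forall>a m. Vector_Spaces.linear sc sc (Y a m))
   \<and> (\<forall>m b. Vector_Spaces.linear sc sc (\<lambda>a. Y a m b))
   \<and> (\<forall>a b. \<exists>N. \<forall>m\<ge>N. Y a m b = 0)
   \<and> (\<forall>m b. Y vac m b = (if m = -1 then b else 0))
   \<and> (\<forall>a. Y a (-1) vac = a \<and> (\<forall>m\<ge>0. Y a m vac = 0))
   \<and> (\<forall>a b u p q r.
        fsum (\<lambda>i. sc ((of_int p) gchoose i) (Y (Y a (r + int i) b) (p + q - int i) u))
      = fsum (\<lambda>i. sc (sgn_pow (int i) * ((of_int r) gchoose i)) (Y a (p + r - int i) (Y b (q + int i) u)))
      - fsum (\<lambda>i. sc (sgn_pow (r + int i) * ((of_int r) gchoose i)) (Y b (q + r - int i) (Y a (p + int i) u))))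
   \<and> (\<forall>m k v. Lmode Y w m (Lmode Y w k v) - Lmode Y w k (Lmode Y w m v)
        = sc (of_int (m - k)) (Lmode Y w (m + k) v)
          + (if m + k = 0 then sc (cv / 12 * of_int (m^3 - m)) v else 0))
   \<and> (\<forall>a m b. Y (Lmode Y w (-1) a) m b = sc (- of_int m) (Y a (m - 1) b))
   \<and> module.span sc (\<Union>k. L0_eigenspace sc Y w k) = UNIV
   \<and> (\<forall>k. \<exists>B. finite B \<and> B \<subseteq> L0_eigenspace sc Y w k
            \<and> L0_eigenspace sc Y w k \<subseteq> module.span sc B)
   \<and> (\<exists>N. \<forall>k<N. L0_eigenspace sc Y w k = {0})"

definition VOA_aut ::
  "(complex \<Rightarrow> 'v::ab_group_add \<Rightarrow> 'v) \<Rightarrow> ('v \<Rightarrow> int \<Rightarrow> 'v \<Rightarrow> 'v) \<Rightarrow> 'v \<Rightarrow> ('v \<Rightarrow> 'v) \<Rightarrow> bool" where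
  "VOA_aut sc Y w g \<longleftrightarrow> Vector_Spaces.linear sc sc g \<and> bij g
     \<and> (\<forall>a m b. g (Y a m b) = Y (g a) m (g b)) \<and> g w = w"

text \<open>Word of modes applied to the vacuum: wapp om [(i1,m1),...,(ik,mk)] =
  L_{i1}(m1) ... L_{ik}(mk) vac, where L_i(m) = (om i)_(m+1).\<close>
fun wapp :: "('v \<Rightarrow> int \<Rightarrow> 'v \<Rightarrow> 'v) \<Rightarrow> 'v \<Rightarrow> (nat \<Rightarrow> 'v) \<Rightarrow> (nat \<times> int) list \<Rightarrow> 'v" where
  "wapp Y vac om [] = vac"
| "wapp Y vac om ((i, m) # xs) = Y (om i) (m + 1) (wapp Y vac om xs)"

definition pbw_le :: "nat \<times> int \<Rightarrow> nat \<times> int \<Rightarrow> bool" where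
  "pbw_le x y \<longleftrightarrow> fst x < fst y \<or> (fst x = fst y \<and> snd x \<le> snd y)"

definition pbw_words :: "nat \<Rightarrow> (nat \<times> int) list set" where
  "pbw_words n = {xs. set xs \<subseteq> {1..n} \<times> {..-2} \<and> sorted_wrt pbw_le xs}"

text \<open>(V, Y, vac, om) is the universal Virasoro VOA tensor power V_c^{\<otimes> n}:
  a VOA with conformal vector om 1 + ... + om n, where the om i have commuting Virasoro
  modes of central charge c and the ordered PBW monomials form a basis.  This determines
  V_c^{\<otimes> n} up to isomorphism (with om i the i-th tensor copy of omega).\<close>
definition is_Vir_tensor_power ::
  "complex \<Rightarrow> nat \<Rightarrow> (complex \<Rightarrow> 'v::ab_group_add \<Rightarrow> 'v) \<Rightarrow> ('v \<Rightarrow> int \<Rightarrow> 'v \<Rightarrow> 'v) \<Rightarrow> 'v \<Rightarrow> (nat \<Rightarrow> 'v) \<Rightarrow> bool" where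
  "is_Vir_tensor_power c n sc Y vac om \<longleftrightarrow>
     is_VOA sc Y vac (\<Sum>i=1..n. om i) (of_nat n * c)
   \<and> (\<forall>i\<in>{1..n}. \<forall>j\<in>{1..n}. \<forall>m k v.
        Lmode Y (om i) m (Lmode Y (om j) k v) - Lmode Y (om j) k (Lmode Y (om i) m v)
        = (if i = j then sc (of_int (m - k)) (Lmode Y (om i) (m + k) v)
             + (if m + k = 0 then sc (c / 12 * of_int (m^3 - m)) v else 0)
           else 0))
   \<and> inj_on (wapp Y vac om) (pbw_words n)
   \<and> \<not> module.dependent sc (wapp Y vac om ` pbw_words n)
   \<and> module.span sc (wapp Y vac om ` pbw_words n) = UNIV"

definition perm_act ::
  "nat \<Rightarrow> (complex \<Rightarrow> 'v::ab_group_add \<Rightarrow> 'v) \<Rightarrow> ('v \<Rightarrow> int \<Rightarrow> 'v \<Rightarrow> 'v) \<Rightarrow> 'v \<Rightarrow> (nat \<Rightarrow> 'v)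
     \<Rightarrow> (nat \<Rightarrow> nat) \<Rightarrow> 'v \<Rightarrow> 'v" where
  "perm_act n sc Y vac om \<sigma> = (THE g. Vector_Spaces.linear sc sc g \<and>
     (\<forall>xs. set (map fst xs) \<subseteq> {1..n} \<longrightarrow>
        g (wapp Y vac om xs) = wapp Y vac om (map (\<lambda>(i, m). (\<sigma> i, m)) xs)))"

end

theory Submission
  imports Defs "HOL-Library.Product_Lexorder"
begin

text \<open>Permuting the tensor factors sends a word in the modes \<open>L\<^sub>i(m)\<close> to another such word, and
  straightening with the Virasoro relations shows that this is compatible with the linear relations
  among words; so every \<open>\<sigma> \<in> S\<^sub>n\<close> defines a linear bijection, determined by its values on the PBW
  basis, which intertwines the modes of the generators \<open>\<omega>\<^sub>i\<close> and hence, by the Borcherds iterate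
  formula, all vertex operators.

  Conversely, an automorphism \<open>g\<close> fixes \<open>\<omega> = \<omega>\<^sub>1 + \<dots> + \<omega>\<^sub>n\<close>, hence commutes with \<open>L(0) = \<omega>_(1)\<close>
  and preserves the weight-two space, whose PBW basis is \<open>\<omega>\<^sub>1, \<dots>, \<omega>\<^sub>n\<close>. Since
  \<open>\<omega>\<^sub>i_(1) \<omega>\<^sub>j = 2 \<delta>\<^sub>i\<^sub>j \<omega>\<^sub>i\<close>, the vectors \<open>\<omega>\<^sub>i/2\<close> are orthogonal idempotents of the weight-two space
  under this product, and together with \<open>g \<omega> = \<omega>\<close> this forces the matrix of \<open>g\<close> on the
  weight-two space to be a permutation matrix. As the \<open>\<omega>\<^sub>i\<close> generate, \<open>g\<close> is the corresponding
  permutation automorphism.\<close>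

section \<open>Words of Virasoro modes\<close>

abbreviation word_over :: "nat \<Rightarrow> (nat \<times> int) list \<Rightarrow> bool" where
  "word_over n xs \<equiv> set (map fst xs) \<subseteq> {1..n}"

lemma word_over_relabel:
  "\<sigma> permutes {1..n} \<Longrightarrow> word_over n xs \<Longrightarrow> word_over n (map (apfst \<sigma>) xs)"
  using permutes_in_image by fastforce

lemma pbw_words_word_over: "xs \<in> pbw_words n \<Longrightarrow> word_over n xs"
  unfolding pbw_words_def by auto

lemma singleton_pbw_word: "i \<in> {1..n} \<Longrightarrow> [(i, -2)] \<in> pbw_words n"
  by (simp add: pbw_words_def)

definition word_weight :: "(nat \<times> int) list \<Rightarrow> int" where
  "word_weight xs = (\<Sum>x\<leftarrow>xs. - snd x)"

lemma word_weight_simps [simp]: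
  "word_weight [] = 0" "word_weight ((i, m) # xs) = - m + word_weight xs"
  by (simp_all add: word_weight_def)

lemma pbw_words_weight_two:
  assumes "xs \<in> pbw_words n" "word_weight xs = 2"
  shows "\<exists>j\<in>{1..n}. xs = [(j, -2)]"
proof -
  have modes: "\<forall>x\<in>set xs. fst x \<in> {1..n} \<and> snd x \<le> -2"
    using assms(1) unfolding pbw_words_def by auto
  have "word_weight ys \<ge> 2 * int (length ys)" if "\<forall>x\<in>set ys. snd x \<le> -2" for ys
    using that by (induction ys) (auto simp: word_weight_def)
  then have "length xs \<le> 1" using modes assms(2) by fastforce
  moreover have "xs \<noteq> []" using assms(2) by auto
  ultimately obtain j m where "xs = [(j, m)]"
    by (cases xs) auto
  then show ?thesis using modes assms(2) by auto
qed

text \<open>Straightening moves the modes \<open>m \<ge> -1\<close>, which annihilate the vacuum, to the right end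
  and sorts the others by \<open>pbw_le\<close>.\<close>

definition straighten_key :: "nat \<times> int \<Rightarrow> nat \<times> nat \<times> int" where
  "straighten_key x = (if snd x \<ge> -1 then 1 else 0, fst x, snd x)"

fun inversions :: "(nat \<times> int) list \<Rightarrow> nat" where
  "inversions [] = 0"
| "inversions (x # xs) = length (filter (\<lambda>y. straighten_key y < straighten_key x) xs) + inversions xs"

lemma inversions_swap_less:
  "straighten_key y < straighten_key x \<Longrightarrow> inversions (as @ y # x # bs) < inversions (as @ x # y # bs)"
  by (induction as) auto

lemma not_sorted_adjacent_descent:
  "\<not> sorted (map f xs) \<Longrightarrow> \<exists>as x y bs. xs = as @ x # y # bs \<and> f y < f x"
proof (induction xs rule: induct_list012)
  case (3 x y zs)
  show ?case
  proof (cases "f y < f x")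
    case True
    then show ?thesis by (metis append_Nil)
  next
    case False
    then have "\<not> sorted (map f (y # zs))"
      using "3.prems" unfolding list.map sorted2 by (simp add: not_less)
    then obtain as u v bs where "y # zs = as @ u # v # bs" "f v < f u"
      using "3.IH" by blast
    then show ?thesis by (metis append_Cons)
  qed
qed auto

lemma sorted_straighten_key_pbw_words:
  assumes "sorted (map straighten_key (as @ [(i, m)]))" and "word_over n (as @ [(i, m)])"
    and "m \<le> -2"
  shows "as @ [(i, m)] \<in> pbw_words n"
proof -
  have low: "snd x \<le> -2" if "x \<in> set (as @ [(i, m)])" for x
    using assms(1,3) that by (auto simp: sorted_append straighten_key_def less_eq_prod_simp split: if_splits)
  have "sorted_wrt (\<lambda>x y. straighten_key x \<le> straighten_key y) (as @ [(i, m)])"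
    using assms(1) unfolding sorted_map .
  then have "sorted_wrt pbw_le (as @ [(i, m)])"
  proof (rule sorted_wrt_mono_rel[rotated])
    fix x y assume "x \<in> set (as @ [(i, m)])" "y \<in> set (as @ [(i, m)])"
      and "straighten_key x \<le> straighten_key y"
    with low[of x] low[of y] show "pbw_le x y"
      by (cases x; cases y) (auto simp: straighten_key_def pbw_le_def less_eq_prod_simp)
  qed
  with low assms(2) show ?thesis
    unfolding pbw_words_def by force
qed

lemma straightening_induct [consumes 1, case_names pbw annihilated swap]:
  assumes "word_over n xs"
    and pbw: "\<And>xs. xs \<in> pbw_words n \<Longrightarrow> P xs"
    and annihilated: "\<And>as i m. m \<ge> -1 \<Longrightarrow> P (as @ [(i, m)])"
    and swap: "\<And>as i m j k bs. word_over n (as @ (i, m) # (j, k) # bs) \<Longrightarrow>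
        P (as @ (j, k) # (i, m) # bs) \<Longrightarrow> P (as @ (i, m + k) # bs) \<Longrightarrow> P (as @ bs) \<Longrightarrow>
        P (as @ (i, m) # (j, k) # bs)"
  shows "P xs"
  using assms(1)
proof (induction xs rule: wf_induct[OF wf_measures[of "[length, inversions]"]])
  case (1 xs)
  have IH: "P ys" if "word_over n ys"
      "length ys < length xs \<or> length ys = length xs \<and> inversions ys < inversions xs" for ys
    using 1(1)[rule_format, of ys] that by auto
  show ?case
  proof (cases "sorted (map straighten_key xs)")
    case False
    then obtain as i m j k bs where xs: "xs = as @ (i, m) # (j, k) # bs"
      and descent: "straighten_key (j, k) < straighten_key (i, m)"
      using not_sorted_adjacent_descent by fastforce
    have over: "word_over n (as @ (i, m) # (j, k) # bs)"
      using "1.prems" xs by simp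
    show ?thesis
      unfolding xs
      by (rule swap[OF over]; rule IH)
         (use over inversions_swap_less[OF descent] in \<open>auto simp: xs\<close>)+
  next
    case sorted: True
    show ?thesis
    proof (cases xs rule: rev_cases)
      case Nil
      then show ?thesis by (intro pbw) (simp add: pbw_words_def)
    next
      case (snoc as x)
      obtain i m where x: "x = (i, m)" by fastforce
      show ?thesis
      proof (cases "m \<ge> -1")
        case True
        then show ?thesis using annihilated snoc x by simp
      next
        case False
        then show ?thesis
          using sorted 1(2) sorted_straighten_key_pbw_words pbw snoc x by simp
      qed
    qed
  qed
qed

section \<open>Eigenbases and permutation matrices\<close>

lemma (in vector_space) eigenvector_in_span_eigenbasis:
  assumes B: "independent B" and v: "v \<in> span B" and lin: "Vector_Spaces.linear scale scale f"
    and eigenbasis: "\<And>b. b \<in> B \<Longrightarrow> f b = \<mu> b *s b" and eigen: "f v = \<kappa> *s v"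
  shows "v \<in> span {b \<in> B. \<mu> b = \<kappa>}"
proof -
  interpret f: Vector_Spaces.linear scale scale f by (rule lin)
  let ?R = "representation B v"
  let ?F = "{b. ?R b \<noteq> 0}"
  have F: "finite ?F" "?F \<subseteq> B"
    using finite_representation representation_ne_zero by auto
  have v_eq: "(\<Sum>b\<in>?F. ?R b *s b) = v"
    using sum_nonzero_representation_eq[OF B v] by simp
  have "f v = (\<Sum>b\<in>?F. ?R b *s f b)"
    using arg_cong[OF v_eq[symmetric], of f] by (simp add: f.sum f.scale)
  also have "\<dots> = (\<Sum>b\<in>?F. (?R b * \<mu> b) *s b)"
    using F(2) eigenbasis by (intro sum.cong) auto
  finally have fv: "f v = (\<Sum>b\<in>?F. (?R b * \<mu> b) *s b)" .
  have "\<kappa> *s v = (\<Sum>b\<in>?F. (?R b * \<kappa>) *s b)"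
    using arg_cong[OF v_eq[symmetric], of "scale \<kappa>"] by (simp add: scale_sum_right mult.commute)
  with fv have "(\<Sum>b\<in>?F. (?R b * (\<mu> b - \<kappa>)) *s b) = f v - \<kappa> *s v"
    by (simp add: right_diff_distrib scale_left_diff_distrib sum_subtractf)
  also have "\<dots> = 0" using eigen by simp
  finally have "?R b * (\<mu> b - \<kappa>) = 0" if "b \<in> ?F" for b
    using independentD[OF B F, of "\<lambda>b. ?R b * (\<mu> b - \<kappa>)"] that by simp
  then have "?F \<subseteq> {b \<in> B. \<mu> b = \<kappa>}"
    using F(2) by auto
  then have "(\<Sum>b\<in>?F. ?R b *s b) \<in> span {b \<in> B. \<mu> b = \<kappa>}"
    by (intro span_sum span_scale span_base) auto
  then show ?thesis
    unfolding v_eq .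
qed

lemma permutation_matrix_of_orthogonal_idempotents:
  fixes a :: "'i \<Rightarrow> 'i \<Rightarrow> 'a::idom"
  assumes I: "finite I"
    and orth: "\<And>i k j. i \<in> I \<Longrightarrow> k \<in> I \<Longrightarrow> j \<in> I \<Longrightarrow> a i j * a k j = (if i = k then a i j else 0)"
    and col: "\<And>j. j \<in> I \<Longrightarrow> (\<Sum>i\<in>I. a i j) = 1"
    and row: "\<And>i. i \<in> I \<Longrightarrow> \<exists>j\<in>I. a i j \<noteq> 0"
  obtains \<sigma> where "\<sigma> permutes I" "\<And>i j. i \<in> I \<Longrightarrow> j \<in> I \<Longrightarrow> a i j = (if j = \<sigma> i then 1 else 0)"
proof -
  have unique: "\<exists>!i. i \<in> I \<and> a i j \<noteq> 0" if j: "j \<in> I" for j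
  proof (rule ex_ex1I)
    show "\<exists>i. i \<in> I \<and> a i j \<noteq> 0"
      using col[OF j] by (metis (no_types, lifting) one_neq_zero sum.neutral)
    show "i = k" if "i \<in> I \<and> a i j \<noteq> 0" "k \<in> I \<and> a k j \<noteq> 0" for i k
      using orth[of i k j] that j by (auto split: if_splits)
  qed
  have one: "a i j = 1" if "i \<in> I" "j \<in> I" "a i j \<noteq> 0" for i j
  proof -
    have "a i j * (a i j - 1) = 0" using orth[of i i j] that by (simp add: algebra_simps)
    then show ?thesis using that(3) by simp
  qed
  define \<tau> where "\<tau> j = (THE i. i \<in> I \<and> a i j \<noteq> 0)" for j
  have \<tau>: "i = \<tau> j \<longleftrightarrow> a i j \<noteq> 0" if "i \<in> I" "j \<in> I" for i j
    using theI'[OF unique[OF that(2)]] the1_equality[OF unique[OF that(2)]] that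
    unfolding \<tau>_def by blast
  have "\<tau> ` I = I"
    using theI'[OF unique] row \<tau> unfolding \<tau>_def by blast
  then have bij: "bij_betw \<tau> I I"
    using I by (simp add: bij_betw_def eq_card_imp_inj_on)
  define \<sigma> where "\<sigma> i = (if i \<in> I then inv_into I \<tau> i else i)" for i
  have "bij_betw \<sigma> I I"
    using bij_betw_inv_into[OF bij] by (rule bij_betw_cong[THEN iffD1, rotated]) (simp add: \<sigma>_def)
  then have perm: "\<sigma> permutes I"
    by (rule bij_imp_permutes) (simp add: \<sigma>_def)
  have \<sigma>\<tau>: "j = \<sigma> i \<longleftrightarrow> i = \<tau> j" if "i \<in> I" "j \<in> I" for i j
    using that bij unfolding \<sigma>_def bij_betw_def by (auto simp: f_inv_into_f)
  show thesis
  proof (rule that[OF perm])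
    fix i j assume "i \<in> I" "j \<in> I"
    then show "a i j = (if j = \<sigma> i then 1 else 0)"
      using \<tau>[of i j] one[of i j] \<sigma>\<tau>[of i j] by auto
  qed
qed

section \<open>The tensor power \<open>V\<^sub>c\<^sup>\<otimes>\<^sup>n\<close>\<close>

lemma fsum_single: "(\<And>i. i \<noteq> 0 \<Longrightarrow> g i = 0) \<Longrightarrow> fsum g = g 0"
proof -
  assume "\<And>i. i \<noteq> 0 \<Longrightarrow> g i = 0"
  then have "{i. g i \<noteq> 0} \<subseteq> {0}" by blast
  then have "sum g {i. g i \<noteq> 0} = sum g {0}" by (intro sum.mono_neutral_left) auto
  then show ?thesis unfolding fsum_def by simp
qed

locale Vir_tensor_power =
  fixes c :: complex and n :: nat and sc :: "complex \<Rightarrow> 'v::ab_group_add \<Rightarrow> 'v"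
    and Y :: "'v \<Rightarrow> int \<Rightarrow> 'v \<Rightarrow> 'v" and vac :: 'v and om :: "nat \<Rightarrow> 'v"
  assumes tensor_power: "is_Vir_tensor_power c n sc Y vac om"
begin

abbreviation W :: "(nat \<times> int) list \<Rightarrow> 'v" where
  "W \<equiv> wapp Y vac om"

abbreviation w :: 'v where
  "w \<equiv> \<Sum>i=1..n. om i"

lemma VOA: "is_VOA sc Y vac w (of_nat n * c)"
  using tensor_power unfolding is_Vir_tensor_power_def by (elim conjE) blast

sublocale vs: vector_space sc
  using VOA unfolding is_VOA_def by (elim conjE) blast

sublocale vp: vector_space_pair sc sc ..

lemma linear_Y: "Vector_Spaces.linear sc sc (Y a m)"
  using VOA unfolding is_VOA_def by (elim conjE) blast

lemma linear_Y_left: "Vector_Spaces.linear sc sc (\<lambda>a. Y a m b)"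
  using VOA unfolding is_VOA_def by (elim conjE) blast

lemma Y_vac_left: "Y vac m b = (if m = -1 then b else 0)"
  using VOA unfolding is_VOA_def by (elim conjE) blast

lemma Y_vac_creation: "Y a (-1) vac = a"
  using VOA unfolding is_VOA_def by (elim conjE) blast

lemma Y_vac_annihilation: "m \<ge> 0 \<Longrightarrow> Y a m vac = 0"
  using VOA unfolding is_VOA_def by (elim conjE) blast

lemma Borcherds: "fsum (\<lambda>i. sc ((of_int p) gchoose i) (Y (Y a (r + int i) b) (p + q - int i) u))
    = fsum (\<lambda>i. sc (sgn_pow (int i) * ((of_int r) gchoose i)) (Y a (p + r - int i) (Y b (q + int i) u)))
    - fsum (\<lambda>i. sc (sgn_pow (r + int i) * ((of_int r) gchoose i)) (Y b (q + r - int i) (Y a (p + int i) u)))"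
  using VOA unfolding is_VOA_def by (elim conjE) blast

lemma Virasoro_commutator:
  assumes "i \<in> {1..n}" "j \<in> {1..n}"
  shows "Y (om i) (m + 1) (Y (om j) (k + 1) v) = Y (om j) (k + 1) (Y (om i) (m + 1) v)
    + (if i = j then sc (of_int (m - k)) (Y (om i) (m + k + 1) v)
         + (if m + k = 0 then sc (c / 12 * of_int (m^3 - m)) v else 0)
       else 0)"
proof -
  have "Y (om i) (m + 1) (Y (om j) (k + 1) v) - Y (om j) (k + 1) (Y (om i) (m + 1) v)
    = (if i = j then sc (of_int (m - k)) (Y (om i) (m + k + 1) v)
         + (if m + k = 0 then sc (c / 12 * of_int (m^3 - m)) v else 0)
       else 0)"
    using tensor_power assms unfolding is_Vir_tensor_power_def Lmode_def by (auto simp: add.assoc)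
  then show ?thesis
    by (simp add: algebra_simps)
qed

lemma pbw_inj: "inj_on W (pbw_words n)"
  using tensor_power unfolding is_Vir_tensor_power_def by (elim conjE) blast

lemma pbw_independent: "vs.independent (W ` pbw_words n)"
  using tensor_power unfolding is_Vir_tensor_power_def by (elim conjE) blast

lemma pbw_span: "vs.span (W ` pbw_words n) = UNIV"
  using tensor_power unfolding is_Vir_tensor_power_def by (elim conjE) blast

lemma Y_0 [simp]: "Y a m 0 = 0"
  using linear_Y by (rule vp.linear_0)

lemma Y_add: "Y a m (x + y) = Y a m x + Y a m y"
  using linear_Y by (rule vp.linear_add)

lemma Y_scale: "Y a m (sc k x) = sc k (Y a m x)"
  using linear_Y by (rule vp.linear_scale)

lemma Y_sum_left: "Y (\<Sum>j\<in>S. f j) m v = (\<Sum>j\<in>S. Y (f j) m v)"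
  using vp.linear_sum[OF linear_Y_left, of f S] by simp

lemma Y_scale_left: "Y (sc k a) m v = sc k (Y a m v)"
  using vp.linear_scale[OF linear_Y_left, of k a] by simp

lemma fsum_linear_inj:
  assumes "Vector_Spaces.linear sc sc f" "inj f"
  shows "f (fsum g) = fsum (\<lambda>i. f (g i))"
proof -
  have "f x = 0 \<longleftrightarrow> x = 0" for x
    using assms vp.linear_0[OF assms(1)] by (metis injD)
  then show ?thesis
    unfolding fsum_def by (simp add: vp.linear_sum[OF assms(1)])
qed

lemma Y_iterate:
  "Y (Y a r b) q u =
     fsum (\<lambda>i. sc (sgn_pow (int i) * ((of_int r) gchoose i)) (Y a (r - int i) (Y b (q + int i) u)))
   - fsum (\<lambda>i. sc (sgn_pow (r + int i) * ((of_int r) gchoose i)) (Y b (q + r - int i) (Y a (int i) u)))"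
proof -
  have "fsum (\<lambda>i. sc ((of_int 0) gchoose i) (Y (Y a (r + int i) b) (0 + q - int i) u)) = Y (Y a r b) q u"
    by (subst fsum_single) (auto simp: gbinomial_0_left)
  then show ?thesis using Borcherds[of 0 a r b q u] by simp
qed

lemma wapp_swap:
  assumes "i \<in> {1..n}" "j \<in> {1..n}"
  shows "W (as @ (i, m) # (j, k) # bs) = W (as @ (j, k) # (i, m) # bs)
    + (if i = j then sc (of_int (m - k)) (W (as @ (i, m + k) # bs))
         + (if m + k = 0 then sc (c / 12 * of_int (m^3 - m)) (W (as @ bs)) else 0)
       else 0)"
  by (induction as) (auto simp: Virasoro_commutator[OF assms] Y_add Y_scale)

lemma wapp_annihilated: "m \<ge> -1 \<Longrightarrow> W (as @ [(i, m)]) = 0"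
  by (induction as) (auto simp: Y_vac_annihilation)

lemma om_eq_wapp: "om i = W [(i, -2)]"
  by (simp add: Y_vac_creation)

lemma om_pbw_basis: "om ` {1..n} \<subseteq> W ` pbw_words n"
  using image_eqI[where f = W, OF om_eq_wapp singleton_pbw_word] by blast

lemma inj_on_om: "inj_on om {1..n}"
proof (rule inj_onI)
  fix i j assume ij: "i \<in> {1..n}" "j \<in> {1..n}" and "om i = om j"
  then have "W [(i, -2)] = W [(j, -2)]"
    by (simp only: om_eq_wapp[symmetric])
  then show "i = j"
    using inj_onD[OF pbw_inj _ singleton_pbw_word[OF ij(1)] singleton_pbw_word[OF ij(2)]] by simp
qed

lemma om_nonzero:
  assumes "i \<in> {1..n}"
  shows "om i \<noteq> 0"
proof
  assume "om i = 0"
  then have "0 \<in> W ` pbw_words n"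
    using om_pbw_basis assms by force
  then show False
    using pbw_independent vs.dependent_zero by blast
qed

lemma linear_eq_on_words:
  assumes "Vector_Spaces.linear sc sc f" "Vector_Spaces.linear sc sc g"
    and "\<And>xs. word_over n xs \<Longrightarrow> f (W xs) = g (W xs)"
  shows "f = g"
proof
  fix x
  have "x \<in> vs.span (W ` pbw_words n)" using pbw_span by simp
  then show "f x = g x"
    by (rule vp.linear_eq_on[OF assms(1,2)]) (use assms(3) pbw_words_word_over in blast)
qed

lemma hom_of_generators:
  assumes lin: "Vector_Spaces.linear sc sc f" and inj: "inj f" and vac: "f vac = vac"
    and gen: "\<And>i m v. i \<in> {1..n} \<Longrightarrow> f (Y (om i) m v) = Y (f (om i)) m (f v)"
  shows "f (Y a m v) = Y (f a) m (f v)"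
proof -
  have words: "f (Y (W xs) m v) = Y (f (W xs)) m (f v)" if "word_over n xs" for xs m v
    using that
  proof (induction xs arbitrary: m v)
    case Nil
    then show ?case by (simp add: Y_vac_left vac vp.linear_0[OF lin])
  next
    case (Cons x xs)
    obtain i k where x: "x = (i, k)" by fastforce
    have i: "i \<in> {1..n}" and xs: "word_over n xs" using Cons.prems x by auto
    have "f (Y (W (x # xs)) m v) = f (Y (Y (om i) (k + 1) (W xs)) m v)" using x by simp
    also have "\<dots> =
        fsum (\<lambda>t. sc (sgn_pow (int t) * ((of_int (k + 1)) gchoose t))
          (Y (f (om i)) (k + 1 - int t) (Y (f (W xs)) (m + int t) (f v))))
      - fsum (\<lambda>t. sc (sgn_pow ((k + 1) + int t) * ((of_int (k + 1)) gchoose t))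
          (Y (f (W xs)) (m + (k + 1) - int t) (Y (f (om i)) (int t) (f v))))"
      by (subst Y_iterate) (simp add: vp.linear_diff[OF lin] fsum_linear_inj[OF lin inj]
          vp.linear_scale[OF lin] gen[OF i] Cons.IH[OF xs])
    also have "\<dots> = Y (Y (f (om i)) (k + 1) (f (W xs))) m (f v)"
      by (rule Y_iterate[symmetric])
    also have "\<dots> = Y (f (W (x # xs))) m (f v)" using x gen[OF i] by simp
    finally show ?case .
  qed
  have "(\<lambda>a. f (Y a m v)) = (\<lambda>a. Y (f a) m (f v))"
  proof (rule linear_eq_on_words)
    show "Vector_Spaces.linear sc sc (\<lambda>a. f (Y a m v))"
      using Vector_Spaces.linear_compose[OF linear_Y_left lin] by (simp add: o_def)
    show "Vector_Spaces.linear sc sc (\<lambda>a. Y (f a) m (f v))"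
      using Vector_Spaces.linear_compose[OF lin linear_Y_left] by (simp add: o_def)
  qed (rule words)
  then show ?thesis by (simp add: fun_eq_iff)
qed

section \<open>Permutation automorphisms\<close>

lemma linear_relabel_from_pbw:
  assumes \<sigma>: "\<sigma> permutes {1..n}" and lin: "Vector_Spaces.linear sc sc \<phi>"
    and on_pbw: "\<And>b. b \<in> pbw_words n \<Longrightarrow> \<phi> (W b) = W (map (apfst \<sigma>) b)"
    and "word_over n xs"
  shows "\<phi> (W xs) = W (map (apfst \<sigma>) xs)"
  using assms(4)
proof (induction xs rule: straightening_induct)
  case (pbw xs)
  then show ?case by (rule on_pbw)
next
  case (annihilated as i m)
  then show ?case
    using wapp_annihilated[OF annihilated] vp.linear_0[OF lin] by simp
next
  case (swap as i m j k bs)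
  have ij: "i \<in> {1..n}" "j \<in> {1..n}" using swap.hyps by auto
  have \<sigma>ij: "\<sigma> i \<in> {1..n}" "\<sigma> j \<in> {1..n}" using ij permutes_in_image[OF \<sigma>] by auto
  have \<sigma>_eq: "\<sigma> i = \<sigma> j \<longleftrightarrow> i = j" using permutes_inj[OF \<sigma>] by (auto dest: injD)
  let ?r = "map (apfst \<sigma>)"
  have "\<phi> (W (as @ (i, m) # (j, k) # bs)) = \<phi> (W (as @ (j, k) # (i, m) # bs))
    + (if i = j then sc (of_int (m - k)) (\<phi> (W (as @ (i, m + k) # bs)))
         + (if m + k = 0 then sc (c / 12 * of_int (m^3 - m)) (\<phi> (W (as @ bs))) else 0)
       else 0)"
    unfolding wapp_swap[OF ij]
    by (simp add: vp.linear_add[OF lin] vp.linear_scale[OF lin] vp.linear_0[OF lin])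
  also have "\<dots> = W (?r (as @ (j, k) # (i, m) # bs))
    + (if \<sigma> i = \<sigma> j then sc (of_int (m - k)) (W (?r (as @ (i, m + k) # bs)))
         + (if m + k = 0 then sc (c / 12 * of_int (m^3 - m)) (W (?r (as @ bs))) else 0)
       else 0)"
    unfolding swap.IH \<sigma>_eq ..
  also have "\<dots> = W (?r (as @ (i, m) # (j, k) # bs))"
    using wapp_swap[OF \<sigma>ij, of "?r as" m k "?r bs"] by simp
  finally show ?case .
qed

definition perm_map :: "(nat \<Rightarrow> nat) \<Rightarrow> 'v \<Rightarrow> 'v" where
  "perm_map \<sigma> = vp.construct (W ` pbw_words n)
     (\<lambda>v. W (map (apfst \<sigma>) (inv_into (pbw_words n) W v)))"

lemma linear_perm_map: "Vector_Spaces.linear sc sc (perm_map \<sigma>)"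
  unfolding perm_map_def by (rule vp.linear_construct[OF pbw_independent])

lemma perm_map_wapp:
  assumes "\<sigma> permutes {1..n}" "word_over n xs"
  shows "perm_map \<sigma> (W xs) = W (map (apfst \<sigma>) xs)"
proof (rule linear_relabel_from_pbw[OF assms(1) linear_perm_map _ assms(2)])
  fix b assume "b \<in> pbw_words n"
  then show "perm_map \<sigma> (W b) = W (map (apfst \<sigma>) b)"
    unfolding perm_map_def
    by (subst vp.construct_basis[OF pbw_independent]) (auto simp: inv_into_f_f[OF pbw_inj])
qed

lemma perm_act_eq_perm_map:
  assumes "\<sigma> permutes {1..n}"
  shows "perm_act n sc Y vac om \<sigma> = perm_map \<sigma>"
proof -
  have relabel: "(\<lambda>(i, m). (\<sigma> i, m)) = apfst \<sigma>" by auto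
  show ?thesis
    unfolding perm_act_def relabel
  proof (rule the_equality)
    show "Vector_Spaces.linear sc sc (perm_map \<sigma>) \<and>
        (\<forall>xs. word_over n xs \<longrightarrow> perm_map \<sigma> (W xs) = W (map (apfst \<sigma>) xs))"
      using linear_perm_map perm_map_wapp[OF assms] by blast
  next
    fix g assume "Vector_Spaces.linear sc sc g \<and>
        (\<forall>xs. word_over n xs \<longrightarrow> g (W xs) = W (map (apfst \<sigma>) xs))"
    then show "g = perm_map \<sigma>"
      by (intro linear_eq_on_words) (auto simp: linear_perm_map perm_map_wapp[OF assms])
  qed
qed

lemma perm_map_comp:
  assumes "\<sigma> permutes {1..n}" "\<tau> permutes {1..n}"
  shows "perm_map (\<sigma> \<circ> \<tau>) = perm_map \<sigma> \<circ> perm_map \<tau>"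
proof (rule linear_eq_on_words)
  show "Vector_Spaces.linear sc sc (perm_map \<sigma> \<circ> perm_map \<tau>)"
    by (rule Vector_Spaces.linear_compose[OF linear_perm_map linear_perm_map])
  fix xs assume xs: "word_over n xs"
  show "perm_map (\<sigma> \<circ> \<tau>) (W xs) = (perm_map \<sigma> \<circ> perm_map \<tau>) (W xs)"
    using perm_map_wapp[OF permutes_compose[OF assms(2,1)] xs] perm_map_wapp[OF assms(2) xs]
      perm_map_wapp[OF assms(1) word_over_relabel[OF assms(2) xs]]
    by (simp add: o_def apfst_compose)
qed (rule linear_perm_map)

lemma perm_map_id: "perm_map id = id"
  by (rule linear_eq_on_words[OF linear_perm_map vs.linear_id])
     (simp add: perm_map_wapp)

lemma bij_perm_map:
  assumes "\<sigma> permutes {1..n}"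
  shows "bij (perm_map \<sigma>)"
proof (rule o_bij)
  show "perm_map \<sigma> \<circ> perm_map (inv \<sigma>) = id" "perm_map (inv \<sigma>) \<circ> perm_map \<sigma> = id"
    using perm_map_comp[OF assms permutes_inv[OF assms]] perm_map_comp[OF permutes_inv[OF assms] assms]
    by (simp_all add: permutes_inv_o[OF assms] perm_map_id)
qed

lemma perm_map_om: "\<sigma> permutes {1..n} \<Longrightarrow> i \<in> {1..n} \<Longrightarrow> perm_map \<sigma> (om i) = om (\<sigma> i)"
  using perm_map_wapp[of \<sigma> "[(i, -2)]"] by (simp add: Y_vac_creation)

lemma perm_map_w:
  assumes "\<sigma> permutes {1..n}"
  shows "perm_map \<sigma> w = w"
proof -
  have "perm_map \<sigma> w = (\<Sum>i=1..n. om (\<sigma> i))"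
    unfolding vp.linear_sum[OF linear_perm_map] using perm_map_om[OF assms] by simp
  also have "\<dots> = w"
    using sum.permute[OF assms, of om] by (simp add: o_def)
  finally show ?thesis .
qed

lemma perm_map_Y_om:
  assumes "\<sigma> permutes {1..n}" "i \<in> {1..n}"
  shows "perm_map \<sigma> (Y (om i) m v) = Y (perm_map \<sigma> (om i)) m (perm_map \<sigma> v)"
proof -
  have "(\<lambda>v. perm_map \<sigma> (Y (om i) m v)) = (\<lambda>v. Y (om (\<sigma> i)) m (perm_map \<sigma> v))"
  proof (rule linear_eq_on_words)
    show "Vector_Spaces.linear sc sc (\<lambda>v. perm_map \<sigma> (Y (om i) m v))"
      using Vector_Spaces.linear_compose[OF linear_Y linear_perm_map] by (simp add: o_def)
    show "Vector_Spaces.linear sc sc (\<lambda>v. Y (om (\<sigma> i)) m (perm_map \<sigma> v))"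
      using Vector_Spaces.linear_compose[OF linear_perm_map linear_Y] by (simp add: o_def)
    fix xs assume xs: "word_over n xs"
    have "Y (om i) m (W xs) = W ((i, m - 1) # xs)" by simp
    then show "perm_map \<sigma> (Y (om i) m (W xs)) = Y (om (\<sigma> i)) m (perm_map \<sigma> (W xs))"
      using perm_map_wapp[OF assms(1), of "(i, m - 1) # xs"] perm_map_wapp[OF assms(1) xs] xs assms(2)
      by simp
  qed
  then show ?thesis
    using perm_map_om[OF assms] by (simp add: fun_eq_iff)
qed

lemma VOA_aut_perm_map:
  assumes "\<sigma> permutes {1..n}"
  shows "VOA_aut sc Y w (perm_map \<sigma>)"
proof -
  have "perm_map \<sigma> vac = vac"
    using perm_map_wapp[OF assms, of "[]"] by simp
  then have "perm_map \<sigma> (Y a m v) = Y (perm_map \<sigma> a) m (perm_map \<sigma> v)" for a m v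
    using hom_of_generators[OF linear_perm_map bij_is_inj[OF bij_perm_map[OF assms]]]
      perm_map_Y_om[OF assms] by blast
  then show ?thesis
    unfolding VOA_aut_def using linear_perm_map bij_perm_map[OF assms] perm_map_w[OF assms] by blast
qed

lemma perm_map_inj:
  assumes "\<sigma> permutes {1..n}" "\<tau> permutes {1..n}" "perm_map \<sigma> = perm_map \<tau>"
  shows "\<sigma> = \<tau>"
proof
  fix i
  show "\<sigma> i = \<tau> i"
  proof (cases "i \<in> {1..n}")
    case True
    then have "om (\<sigma> i) = om (\<tau> i)" using perm_map_om assms by metis
    then show ?thesis
      using inj_onD[OF inj_on_om] True permutes_in_image assms(1,2) by metis
  next
    case False
    then show ?thesis using assms(1,2) by (simp add: permutes_not_in)
  qed
qed

section \<open>Automorphisms and the weight-two space\<close>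

lemma L0_wapp: "word_over n xs \<Longrightarrow> Y w 1 (W xs) = sc (of_int (word_weight xs)) (W xs)"
proof (induction xs)
  case Nil
  then show ?case by (simp add: Y_sum_left Y_vac_annihilation)
next
  case (Cons x xs)
  obtain i m where x: "x = (i, m)" by fastforce
  have i: "i \<in> {1..n}" and xs: "word_over n xs" using Cons.prems x by auto
  have commute: "Y (om j) 1 (Y (om i) (m + 1) v) = Y (om i) (m + 1) (Y (om j) 1 v)
      + (if j = i then sc (of_int (- m)) (Y (om i) (m + 1) v) else 0)" if "j \<in> {1..n}" for j v
    using Virasoro_commutator[OF that i, of 0 m v] by simp
  have "Y w 1 (W (x # xs)) = (\<Sum>j=1..n. Y (om i) (m + 1) (Y (om j) 1 (W xs))
      + (if j = i then sc (of_int (- m)) (Y (om i) (m + 1) (W xs)) else 0))"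
    unfolding Y_sum_left x using commute by (intro sum.cong) auto
  also have "\<dots> = Y (om i) (m + 1) (Y w 1 (W xs)) + sc (of_int (- m)) (Y (om i) (m + 1) (W xs))"
    using i by (simp add: sum.distrib vp.linear_sum[OF linear_Y] Y_sum_left)
  also have "\<dots> = sc (of_int (word_weight (x # xs))) (W (x # xs))"
    using Cons.IH[OF xs] x by (simp add: Y_scale algebra_simps)
  finally show ?case .
qed

lemma weight_two_space:
  assumes "Y w 1 v = sc 2 v"
  shows "v \<in> vs.span (om ` {1..n})"
proof -
  let ?weight = "\<lambda>b. of_int (word_weight (inv_into (pbw_words n) W b)) :: complex"
  have "v \<in> vs.span {b \<in> W ` pbw_words n. ?weight b = 2}"
  proof (rule vs.eigenvector_in_span_eigenbasis[OF pbw_independent _ linear_Y])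
    show "v \<in> vs.span (W ` pbw_words n)" using pbw_span by simp
    show "Y w 1 b = sc (?weight b) b" if "b \<in> W ` pbw_words n" for b
      using that L0_wapp pbw_words_word_over by (auto simp: inv_into_f_f[OF pbw_inj])
  qed (rule assms)
  also have "{b \<in> W ` pbw_words n. ?weight b = 2} \<subseteq> om ` {1..n}"
  proof
    fix b assume "b \<in> {b \<in> W ` pbw_words n. ?weight b = 2}"
    then obtain xs where b: "b = W xs" and "xs \<in> pbw_words n" "?weight (W xs) = 2"
      by blast
    then obtain j where "j \<in> {1..n}" "xs = [(j, -2)]"
      using pbw_words_weight_two[of xs n] by (auto simp: inv_into_f_f[OF pbw_inj])
    with b show "b \<in> om ` {1..n}" by (simp add: Y_vac_creation)
  qed
  then have "vs.span {b \<in> W ` pbw_words n. ?weight b = 2} \<subseteq> vs.span (om ` {1..n})"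
    by (rule vs.span_mono)
  finally show ?thesis .
qed

lemma span_om_coordinates:
  assumes "v \<in> vs.span (om ` {1..n})"
  obtains x where "v = (\<Sum>j=1..n. sc (x j) (om j))"
proof -
  obtain u where "v = (\<Sum>b\<in>om ` {1..n}. sc (u b) b)"
    using assms vs.span_finite[of "om ` {1..n}"] by auto
  then have "v = (\<Sum>j=1..n. sc (u (om j)) (om j))"
    by (subst (asm) sum.reindex[OF inj_on_om]) simp
  then show thesis by (rule that)
qed

lemma om_coordinates_unique:
  assumes "(\<Sum>j=1..n. sc (x j) (om j)) = (\<Sum>j=1..n. sc (y j) (om j))" "j \<in> {1..n}"
  shows "x j = y j"
proof -
  let ?u = "\<lambda>b. x (inv_into {1..n} om b) - y (inv_into {1..n} om b)"
  have "(\<Sum>b\<in>om ` {1..n}. sc (?u b) b) = (\<Sum>j=1..n. sc (x j - y j) (om j))"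
    by (rule sum.reindex_cong[OF inj_on_om refl]) (simp only: inv_into_f_f[OF inj_on_om])
  also have "\<dots> = 0"
    using assms(1) by (simp add: vs.scale_left_diff_distrib sum_subtractf)
  finally have "?u (om j) = 0"
    by (rule vs.independentD[OF pbw_independent finite_imageI[OF finite_atLeastAtMost] om_pbw_basis])
       (rule imageI[OF assms(2)])
  then show ?thesis
    using inv_into_f_f[OF inj_on_om assms(2)] by simp
qed

lemma Y_om_om: "j \<in> {1..n} \<Longrightarrow> l \<in> {1..n} \<Longrightarrow> Y (om j) 1 (om l) = (if j = l then sc 2 (om j) else 0)"
  using Virasoro_commutator[of j l 0 "-2" vac] by (simp add: Y_vac_annihilation Y_vac_creation)

lemma Y_om_coordinates:
  "Y (\<Sum>i=1..n. sc (x i) (om i)) 1 (\<Sum>l=1..n. sc (y l) (om l)) = (\<Sum>j=1..n. sc (2 * x j * y j) (om j))"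
proof -
  have "Y (om j) 1 (\<Sum>l=1..n. sc (y l) (om l)) = sc (2 * y j) (om j)" if j: "j \<in> {1..n}" for j
  proof -
    have "Y (om j) 1 (\<Sum>l=1..n. sc (y l) (om l)) = (\<Sum>l=1..n. sc (y l) (Y (om j) 1 (om l)))"
      by (simp add: vp.linear_sum[OF linear_Y] Y_scale)
    also have "\<dots> = (\<Sum>l=1..n. if j = l then sc (2 * y j) (om j) else 0)"
      using j by (intro sum.cong) (auto simp: Y_om_om mult.commute)
    also have "\<dots> = sc (2 * y j) (om j)" using j by simp
    finally show ?thesis .
  qed
  then show ?thesis
    by (auto simp: Y_sum_left Y_scale_left mult.assoc intro!: sum.cong)
qed

lemma VOA_aut_vac:
  assumes "VOA_aut sc Y w g"
  shows "g vac = vac"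
proof -
  have "Y (g vac) (-1) v = v" for v
  proof -
    obtain u where "v = g u" using assms unfolding VOA_aut_def by (metis bij_pointE)
    then show ?thesis using assms Y_vac_left[of "-1" u] unfolding VOA_aut_def by metis
  qed
  then show ?thesis using Y_vac_creation[of "g vac"] by simp
qed

lemma VOA_aut_om_coordinates:
  assumes g: "VOA_aut sc Y w g"
  obtains a where "\<And>i. i \<in> {1..n} \<Longrightarrow> g (om i) = (\<Sum>j=1..n. sc (a i j) (om j))"
proof -
  have "\<exists>x. g (om i) = (\<Sum>j=1..n. sc (x j) (om j))" if "i \<in> {1..n}" for i
  proof -
    have "Y w 1 (om i) = sc 2 (om i)"
      using L0_wapp[of "[(i, -2)]"] that by (simp add: Y_vac_creation)
    then have "Y w 1 (g (om i)) = sc 2 (g (om i))"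
      using g vp.linear_scale[of g] unfolding VOA_aut_def by metis
    then show ?thesis
      using span_om_coordinates[OF weight_two_space] by metis
  qed
  then show thesis
    using that by metis
qed

context
  fixes g a
  assumes g: "VOA_aut sc Y w g"
    and a: "\<And>i. i \<in> {1..n} \<Longrightarrow> g (om i) = (\<Sum>j=1..n. sc (a i j) (om j))"
begin

lemma VOA_aut_matrix_orthogonal:
  assumes i: "i \<in> {1..n}" and k: "k \<in> {1..n}" and j: "j \<in> {1..n}"
  shows "a i j * a k j = (if i = k then a i j else 0)"
proof -
  have lin: "Vector_Spaces.linear sc sc g" and hom: "g (Y (om i) 1 (om k)) = Y (g (om i)) 1 (g (om k))"
    using g unfolding VOA_aut_def by blast+
  have "(\<Sum>j=1..n. sc (2 * a i j * a k j) (om j)) = g (Y (om i) 1 (om k))"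
    using Y_om_coordinates[of "a i" "a k"] hom a[OF i] a[OF k] by simp
  also have "\<dots> = (\<Sum>j=1..n. sc (if i = k then 2 * a i j else 0) (om j))"
    using i k a[OF i] vp.linear_0[OF lin]
    by (auto simp: Y_om_om vp.linear_scale[OF lin] vs.scale_sum_right)
  finally have "2 * a i j * a k j = (if i = k then 2 * a i j else 0)"
    by (rule om_coordinates_unique[OF _ j])
  then show ?thesis
    by (auto split: if_splits)
qed

lemma VOA_aut_matrix_column_sum:
  assumes j: "j \<in> {1..n}"
  shows "(\<Sum>i=1..n. a i j) = 1"
proof -
  have lin: "Vector_Spaces.linear sc sc g" and gw: "g w = w"
    using g unfolding VOA_aut_def by blast+
  have "(\<Sum>j=1..n. sc (\<Sum>i=1..n. a i j) (om j)) = (\<Sum>i=1..n. \<Sum>j=1..n. sc (a i j) (om j))"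
    unfolding vs.scale_sum_left by (rule sum.swap)
  also have "\<dots> = g w"
    by (simp add: a vp.linear_sum[OF lin])
  also have "\<dots> = (\<Sum>j=1..n. sc 1 (om j))"
    using gw by simp
  finally show ?thesis
    by (rule om_coordinates_unique[OF _ j])
qed

lemma VOA_aut_matrix_row_nonzero:
  assumes i: "i \<in> {1..n}"
  shows "\<exists>j\<in>{1..n}. a i j \<noteq> 0"
proof (rule ccontr)
  assume "\<not> (\<exists>j\<in>{1..n}. a i j \<noteq> 0)"
  then have "g (om i) = 0" using a[OF i] by simp
  moreover have "inj g" "g 0 = 0"
    using g vp.linear_0[of g] unfolding VOA_aut_def by (auto simp: bij_is_inj)
  ultimately show False
    using om_nonzero[OF i] by (metis injD)
qed

end

lemma VOA_aut_permutes_om: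
  assumes g: "VOA_aut sc Y w g"
  obtains \<sigma> where "\<sigma> permutes {1..n}" "\<And>i. i \<in> {1..n} \<Longrightarrow> g (om i) = om (\<sigma> i)"
proof -
  obtain a where a: "\<And>i. i \<in> {1..n} \<Longrightarrow> g (om i) = (\<Sum>j=1..n. sc (a i j) (om j))"
    using VOA_aut_om_coordinates[OF g] by blast
  obtain \<sigma> where \<sigma>: "\<sigma> permutes {1..n}"
    and a_\<sigma>: "\<And>i j. i \<in> {1..n} \<Longrightarrow> j \<in> {1..n} \<Longrightarrow> a i j = (if j = \<sigma> i then 1 else 0)"
    using permutation_matrix_of_orthogonal_idempotents[OF finite_atLeastAtMost
        VOA_aut_matrix_orthogonal[OF g a] VOA_aut_matrix_column_sum[OF g a]
        VOA_aut_matrix_row_nonzero[OF g a]] by blast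
  show thesis
  proof (rule that[OF \<sigma>])
    fix i assume i: "i \<in> {1..n}"
    have "g (om i) = (\<Sum>j=1..n. if j = \<sigma> i then om j else 0)"
      unfolding a[OF i] using i a_\<sigma> by (intro sum.cong) auto
    also have "\<dots> = om (\<sigma> i)"
      using i permutes_in_image[OF \<sigma>] by simp
    finally show "g (om i) = om (\<sigma> i)" .
  qed
qed

lemma VOA_aut_eq_perm_map:
  assumes g: "VOA_aut sc Y w g" and \<sigma>: "\<sigma> permutes {1..n}"
    and g_om: "\<And>i. i \<in> {1..n} \<Longrightarrow> g (om i) = om (\<sigma> i)"
  shows "g = perm_map \<sigma>"
proof (rule linear_eq_on_words)
  show "Vector_Spaces.linear sc sc g" using g unfolding VOA_aut_def by blast
  fix xs assume xs: "word_over n xs"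
  then have "g (W xs) = W (map (apfst \<sigma>) xs)"
  proof (induction xs)
    case Nil
    then show ?case using VOA_aut_vac[OF g] by simp
  next
    case (Cons x xs)
    then show ?case
      using g g_om by (cases x) (auto simp: VOA_aut_def)
  qed
  then show "g (W xs) = perm_map \<sigma> (W xs)"
    using perm_map_wapp[OF \<sigma> xs] by simp
qed (rule linear_perm_map)

end

theorem mainTheorem1:
  fixes c :: complex and n :: nat
    and sc :: "complex \<Rightarrow> 'v::ab_group_add \<Rightarrow> 'v"
    and Y :: "'v \<Rightarrow> int \<Rightarrow> 'v \<Rightarrow> 'v" and vac :: 'v and om :: "nat \<Rightarrow> 'v"
  assumes "n \<ge> 1"
    and "is_Vir_tensor_power c n sc Y vac om"
  shows "bij_betw (perm_act n sc Y vac om) {\<sigma>. \<sigma> permutes {1..n}}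
           {g. VOA_aut sc Y (\<Sum>i=1..n. om i) g}
         \<and> (\<forall>\<sigma> \<tau>. \<sigma> permutes {1..n} \<longrightarrow> \<tau> permutes {1..n} \<longrightarrow>
           perm_act n sc Y vac om (\<sigma> \<circ> \<tau>) = perm_act n sc Y vac om \<sigma> \<circ> perm_act n sc Y vac om \<tau>)"
proof -
  interpret Vir_tensor_power c n sc Y vac om by unfold_locales (rule assms(2))
  let ?S = "{\<sigma>. \<sigma> permutes {1..n}}"
  have "inj_on perm_map ?S"
    by (rule inj_onI) (auto intro: perm_map_inj)
  moreover have "perm_map ` ?S = {g. VOA_aut sc Y w g}"
  proof
    show "perm_map ` ?S \<subseteq> {g. VOA_aut sc Y w g}"
      using VOA_aut_perm_map by blast
    show "{g. VOA_aut sc Y w g} \<subseteq> perm_map ` ?S"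
    proof
      fix g assume g: "g \<in> {g. VOA_aut sc Y w g}"
      then obtain \<sigma> where "\<sigma> permutes {1..n}" "\<And>i. i \<in> {1..n} \<Longrightarrow> g (om i) = om (\<sigma> i)"
        using VOA_aut_permutes_om by blast
      with g show "g \<in> perm_map ` ?S"
        using VOA_aut_eq_perm_map by blast
    qed
  qed
  ultimately have "bij_betw perm_map ?S {g. VOA_aut sc Y w g}"
    unfolding bij_betw_def by blast
  then show ?thesis
    using bij_betw_cong[of ?S "perm_act n sc Y vac om" perm_map] perm_act_eq_perm_map
    by (auto simp: permutes_compose perm_map_comp)
qed

end
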